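(* There is a universal constant $C'>0$ such that the following holds. Let $(\Omega,Q,\pi)$ be a reversible Markov chain on a finite set and let $f$ be a positive function on $\Omega$ with $\mathbb E_\pi f=1$ and $f(\omega)\ge\delta$ for all $\omega\in\Omega$, where $\delta\in(0,1/2]$. Then $$\sum_{\omega\in\Omega}\pi(\omega)\,(f(\omega)-1)\log f(\omega)\le C'\,|\log\delta|\,{\rm Ent}_\pi(f).$$
   Context: ${\rm Ent}_\pi(f):=\mathbb E_\pi[f(\log f-\log\mathbb E_\pi f)]$. *)

theory Defs
  imports Complex_Main
begin

definition reversible_markov_chain ::
  "'a set \<Rightarrow> ('a \<Rightarrow> 'a \<Rightarrow> real) \<Rightarrow> ('a \<Rightarrow> real) \<Rightarrow> bool" where
  "reversible_markov_chain \<Omega> Q \<pi> \<longleftrightarrow>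
     finite \<Omega> \<and> \<Omega> \<noteq> {} \<and>
     (\<forall>x\<in>\<Omega>. \<forall>y\<in>\<Omega>. Q x y \<ge> 0) \<and>
     (\<forall>x\<in>\<Omega>. (\<Sum>y\<in>\<Omega>. Q x y) = 1) \<and>
     (\<forall>x\<in>\<Omega>. \<pi> x > 0) \<and> (\<Sum>x\<in>\<Omega>. \<pi> x) = 1 \<and>
     (\<forall>x\<in>\<Omega>. \<forall>y\<in>\<Omega>. \<pi> x * Q x y = \<pi> y * Q y x)"

definition expect :: "'a set \<Rightarrow> ('a \<Rightarrow> real) \<Rightarrow> ('a \<Rightarrow> real) \<Rightarrow> real" where
  "expect \<Omega> \<pi> f = (\<Sum>x\<in>\<Omega>. \<pi> x * f x)"

definition Ent :: "'a set \<Rightarrow> ('a \<Rightarrow> real) \<Rightarrow> ('a \<Rightarrow> real) \<Rightarrow> real" where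
  "Ent \<Omega> \<pi> f = expect \<Omega> \<pi> (\<lambda>x. f x * (ln (f x) - ln (expect \<Omega> \<pi> f)))"

end

theory Submission
  imports Defs
begin

text \<open>With \<open>\<phi>(t) = t log t - t + 1 \<ge> 0\<close>, a density \<open>f\<close> of mean one has
  \<open>Ent\<^sub>\<pi>(f) = E\<^sub>\<pi> \<phi>(f)\<close>, so it suffices to prove the pointwise bound
  \<open>(t - 1) log t \<le> 8 |log \<delta>| \<phi>(t)\<close> for \<open>t \<ge> \<delta>\<close>. For \<open>t \<ge> 1\<close> already
  \<open>(t - 1) log t \<le> 2 \<phi>(t)\<close>; for \<open>1/2 \<le> t \<le> 1\<close> both sides are of order
  \<open>(1 - t)\<^sup>2\<close>; and for \<open>\<delta> \<le> t \<le> 1/2\<close> the left side is at most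
  \<open>(1 - t) |log \<delta>|\<close> while \<open>\<phi>(t) \<ge> (1 - t)/8\<close>.\<close>

definition entropy_fun :: "real \<Rightarrow> real" where
  "entropy_fun t = t * ln t - t + 1"

lemma one_minus_inverse_le_ln:
  fixes t :: real
  assumes "0 < t"
  shows "1 - 1 / t \<le> ln t"
proof -
  have "ln (1 / t) \<le> 1 / t - 1"
    using assms by (intro ln_le_minus_one) simp
  thus ?thesis
    using assms by (simp add: ln_div)
qed

lemma entropy_fun_nonneg: "0 < t \<Longrightarrow> 0 \<le> entropy_fun t"
  using one_minus_inverse_le_ln[of t] by (simp add: entropy_fun_def field_simps)

lemma diff_mult_ln_le_entropy_fun:
  fixes t :: real
  assumes "1 \<le> t"
  shows "(t - 1) * ln t \<le> 2 * entropy_fun t"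
proof -
  let ?k = "\<lambda>x::real. (x + 1) * ln x - 2 * (x - 1)"
  have "?k 1 \<le> ?k t"
  proof (rule DERIV_nonneg_imp_nondecreasing[OF assms])
    fix x :: real
    assume x: "1 \<le> x" "x \<le> t"
    have "DERIV ?k x :> ln x + (x + 1) / x - 2"
      using x by (auto intro!: derivative_eq_intros)
    moreover have "ln x + (x + 1) / x - 2 \<ge> 0"
      using one_minus_inverse_le_ln[of x] x by (simp add: field_simps)
    ultimately show "\<exists>y. DERIV ?k x :> y \<and> y \<ge> 0"
      by blast
  qed
  thus ?thesis
    by (simp add: entropy_fun_def algebra_simps)
qed

lemma half_square_le_entropy_fun:
  fixes t :: real
  assumes "0 < t" "t \<le> 1"
  shows "(1 - t)\<^sup>2 / 2 \<le> entropy_fun t"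
proof -
  let ?h = "\<lambda>x::real. entropy_fun x - (1 - x)\<^sup>2 / 2"
  have "?h 1 \<le> ?h t"
  proof (rule DERIV_nonpos_imp_nonincreasing[OF assms(2)])
    fix x :: real
    assume x: "t \<le> x" "x \<le> 1"
    have "DERIV ?h x :> ln x + (1 - x)"
      using x assms unfolding entropy_fun_def
      by (auto intro!: derivative_eq_intros simp: field_simps)
    moreover have "ln x + (1 - x) \<le> 0"
      using ln_le_minus_one[of x] x assms by simp
    ultimately show "\<exists>y. DERIV ?h x :> y \<and> y \<le> 0"
      by blast
  qed
  thus ?thesis
    by (simp add: entropy_fun_def)
qed

lemma linear_le_entropy_fun:
  fixes t :: real
  assumes "0 < t" "t \<le> 1/2"
  shows "(1 - t) / 8 \<le> entropy_fun t"
proof -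
  define s where "s = sqrt t"
  have s: "0 < s" "s * s = t"
    using assms by (auto simp: s_def)
  text \<open>\<open>-log t = 2 log (1/s) \<le> 2 (1/s - 1)\<close>, which makes \<open>t (-log t)\<close> a quadratic in \<open>s\<close>.\<close>
  have "- ln s \<le> 1 / s - 1"
    using one_minus_inverse_le_ln[OF s(1)] by simp
  moreover have "ln t = 2 * ln s"
    using s(1) by (simp flip: s(2) add: ln_mult)
  ultimately have "- ln t \<le> 2 * (1 / s - 1)"
    by simp
  hence "t * - ln t \<le> t * (2 * (1 / s - 1))"
    using assms(1) by (rule mult_left_mono[OF _ less_imp_le])
  also have "\<dots> = 2 * s - 2 * t"
    using s(1) by (simp flip: s(2) add: field_simps)
  also have "\<dots> \<le> (1 - t) * (7/8)"
  proof -
    have "s < 7/9"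
    proof (rule ccontr)
      assume "\<not> s < 7/9"
      hence "7/9 * (7/9) \<le> s * s"
        using mult_mono[of "7/9" s "7/9" s] by linarith
      thus False
        using s assms by simp
    qed
    hence "0 \<le> (9 * s - 7) * (s - 1)"
      by (intro mult_nonpos_nonpos) auto
    thus ?thesis
      using s by (simp add: algebra_simps)
  qed
  finally have "- (t * ln t) \<le> (1 - t) * (7/8)"
    by simp
  thus ?thesis
    by (simp add: entropy_fun_def field_simps)
qed

lemma diff_mult_ln_le_abs_ln_mult_entropy_fun:
  fixes t \<delta> :: real
  assumes \<delta>: "0 < \<delta>" "\<delta> \<le> 1/2" and t: "\<delta> \<le> t"
  shows "(t - 1) * ln t \<le> 8 * \<bar>ln \<delta>\<bar> * entropy_fun t"
proof -
  have t_pos: "0 < t"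
    using \<delta> t by simp
  have "1/2 \<le> ln (2::real)"
    using one_minus_inverse_le_ln[of 2] by simp
  moreover have "ln \<delta> \<le> - ln 2"
    using ln_mono[of \<delta> "1/2"] \<delta> by (simp add: ln_div)
  ultimately have abs_ln_\<delta>: "1/2 \<le> \<bar>ln \<delta>\<bar>"
    by linarith
  have \<phi>: "0 \<le> entropy_fun t"
    using entropy_fun_nonneg[OF t_pos] .
  consider "1 \<le> t" | "t \<le> 1/2" | "1/2 < t" "t < 1"
    by linarith
  thus ?thesis
  proof cases
    case 1
    have "(t - 1) * ln t \<le> 2 * entropy_fun t"
      using diff_mult_ln_le_entropy_fun[OF 1] .
    also have "\<dots> \<le> 8 * \<bar>ln \<delta>\<bar> * entropy_fun t"
      using abs_ln_\<delta> \<phi> by (intro mult_right_mono) auto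
    finally show ?thesis .
  next
    case 2
    have "- ln t \<le> \<bar>ln \<delta>\<bar>"
      using \<delta> t by simp
    hence "(t - 1) * ln t \<le> (1 - t) * \<bar>ln \<delta>\<bar>"
      using 2 mult_left_mono[of "- ln t" "\<bar>ln \<delta>\<bar>" "1 - t"] by (simp add: algebra_simps)
    also have "\<dots> = 8 * \<bar>ln \<delta>\<bar> * ((1 - t) / 8)"
      by simp
    also have "\<dots> \<le> 8 * \<bar>ln \<delta>\<bar> * entropy_fun t"
      using linear_le_entropy_fun[OF t_pos 2] by (intro mult_left_mono) auto
    finally show ?thesis .
  next
    case 3
    have "- ln t \<le> 1 / t - 1"
      using one_minus_inverse_le_ln[OF t_pos] by simp
    also have "\<dots> \<le> 2 * (1 - t)"
    proof -
      have "0 \<le> (2 * t - 1) * (1 - t)"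
        using 3 by (intro mult_nonneg_nonneg) auto
      thus ?thesis
        using t_pos by (simp add: field_simps algebra_simps)
    qed
    finally have "(t - 1) * ln t \<le> (1 - t) * (2 * (1 - t))"
      using 3 mult_left_mono[of "- ln t" "2 * (1 - t)" "1 - t"] by (simp add: algebra_simps)
    also have "\<dots> = 4 * ((1 - t)\<^sup>2 / 2)"
      by (simp add: power2_eq_square)
    also have "\<dots> \<le> 4 * entropy_fun t"
      using half_square_le_entropy_fun[OF t_pos] 3 by simp
    also have "\<dots> \<le> 8 * \<bar>ln \<delta>\<bar> * entropy_fun t"
      using abs_ln_\<delta> \<phi> by (intro mult_right_mono) auto
    finally show ?thesis .
  qed
qed

lemma Ent_eq_expect_entropy_fun:
  assumes "(\<Sum>x\<in>\<Omega>. \<pi> x) = 1" and "expect \<Omega> \<pi> f = 1"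
  shows "Ent \<Omega> \<pi> f = expect \<Omega> \<pi> (\<lambda>x. entropy_fun (f x))"
proof -
  have "expect \<Omega> \<pi> (\<lambda>x. entropy_fun (f x))
      = expect \<Omega> \<pi> (\<lambda>x. f x * ln (f x)) - expect \<Omega> \<pi> f + (\<Sum>x\<in>\<Omega>. \<pi> x)"
    by (simp add: expect_def entropy_fun_def algebra_simps sum_subtractf sum.distrib)
  thus ?thesis
    using assms by (simp add: Ent_def expect_def)
qed

theorem mainTheorem13:
  "\<exists>C'::real. C' > 0 \<and>
    (\<forall>(\<Omega>::nat set) Q \<pi> f \<delta>.
       reversible_markov_chain \<Omega> Q \<pi> \<longrightarrow>
       (\<forall>x\<in>\<Omega>. f x > 0) \<longrightarrow>
       expect \<Omega> \<pi> f = 1 \<longrightarrow>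
       0 < \<delta> \<longrightarrow> \<delta> \<le> 1/2 \<longrightarrow>
       (\<forall>x\<in>\<Omega>. f x \<ge> \<delta>) \<longrightarrow>
       (\<Sum>x\<in>\<Omega>. \<pi> x * (f x - 1) * ln (f x)) \<le> C' * \<bar>ln \<delta>\<bar> * Ent \<Omega> \<pi> f)"
proof (intro exI[of _ 8] conjI allI impI)
  fix \<Omega> :: "nat set" and Q \<pi> and f :: "nat \<Rightarrow> real" and \<delta> :: real
  assume chain: "reversible_markov_chain \<Omega> Q \<pi>" and mean: "expect \<Omega> \<pi> f = 1"
    and \<delta>: "0 < \<delta>" "\<delta> \<le> 1/2" and f_ge: "\<forall>x\<in>\<Omega>. f x \<ge> \<delta>"
  have \<pi>: "\<forall>x\<in>\<Omega>. \<pi> x > 0" "(\<Sum>x\<in>\<Omega>. \<pi> x) = 1"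
    using chain by (auto simp: reversible_markov_chain_def)
  have "(\<Sum>x\<in>\<Omega>. \<pi> x * (f x - 1) * ln (f x))
      \<le> (\<Sum>x\<in>\<Omega>. \<pi> x * (8 * \<bar>ln \<delta>\<bar> * entropy_fun (f x)))"
    using \<pi>(1) f_ge diff_mult_ln_le_abs_ln_mult_entropy_fun[OF \<delta>]
    by (intro sum_mono) (simp add: mult.assoc mult_left_mono)
  also have "\<dots> = 8 * \<bar>ln \<delta>\<bar> * expect \<Omega> \<pi> (\<lambda>x. entropy_fun (f x))"
    by (simp add: expect_def sum_distrib_left algebra_simps)
  also have "\<dots> = 8 * \<bar>ln \<delta>\<bar> * Ent \<Omega> \<pi> f"
    using Ent_eq_expect_entropy_fun[OF \<pi>(2) mean] by simp
  finally show "(\<Sum>x\<in>\<Omega>. \<pi> x * (f x - 1) * ln (f x)) \<le> 8 * \<bar>ln \<delta>\<bar> * Ent \<Omega> \<pi> f" .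
qed simp

end
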